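(* For every state $\rho$, $C_f^{\mathcal U}(\rho)\ge2\max_{i\neq j}|\rho_{ij}|$. Moreover, for every single-qubit state $\rho=\begin{pmatrix}p&z\\ z^*&1-p\end{pmatrix}$, \[ C_f^{\mathcal U}(\rho)=\begin{cases}2|z| & \text{if } |z|\le\min\{p,1-p\},\\ +\infty&\text{otherwise.}\end{cases} \]
   Context: Fixed computational basis; logs base 2. $\mathcal U_k$ is the set of uniformly coherent states $|\Psi\rangle=k^{-1/2}\sum_{j\in J}e^{i\theta_j}|j\rangle$ with $|J|=k$, $\theta_j\in\mathbb R$. $C_f^{\mathcal U}(\rho)=\inf\{\sum_\alpha p_\alpha\log k_\alpha:\rho=\sum_\alpha p_\alpha|\Psi_\alpha\rangle\langle\Psi_\alpha|,\ |\Psi_\alpha\rangle\in\mathcal U_{k_\alpha}\}$ over finite convex decompositions, and $+\infty$ if none exists. *)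

theory Defs
  imports Complex_Main "HOL-Library.Extended_Real" "HOL-Library.Numeral_Type"
begin

text \<open>Matrices in the fixed computational basis indexed by a finite type 'n;
  vectors are functions 'n => complex.\<close>

definition is_state :: "('n::finite \<Rightarrow> 'n \<Rightarrow> complex) \<Rightarrow> bool" where
  "is_state \<rho> \<longleftrightarrow>
     (\<forall>i j. \<rho> i j = cnj (\<rho> j i)) \<and>
     (\<forall>v::'n \<Rightarrow> complex. Im (\<Sum>i\<in>UNIV. \<Sum>j\<in>UNIV. cnj (v i) * \<rho> i j * v j) = 0 \<and>
                          Re (\<Sum>i\<in>UNIV. \<Sum>j\<in>UNIV. cnj (v i) * \<rho> i j * v j) \<ge> 0) \<and>
     (\<Sum>i\<in>UNIV. \<rho> i i) = 1"

definition unif_coh :: "nat \<Rightarrow> ('n::finite \<Rightarrow> complex) \<Rightarrow> bool" where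
  "unif_coh k \<psi> \<longleftrightarrow>
     (\<exists>J \<theta>. J \<noteq> {} \<and> card J = k \<and>
        (\<forall>j. \<psi> j = (if j \<in> J then complex_of_real (1 / sqrt (real k)) * cis (\<theta> j) else 0)))"

text \<open>C_f^U: infimum of sum_a p_a log2 k_a over finite convex decompositions into
  uniformly coherent pure states; Inf of the empty set is +infinity.\<close>
definition CfU :: "('n::finite \<Rightarrow> 'n \<Rightarrow> complex) \<Rightarrow> ereal" where
  "CfU \<rho> = Inf {ereal (\<Sum>a\<in>A. p a * log 2 (real (k a))) | A p k \<psi>.
      finite (A :: nat set) \<and>
      (\<forall>a\<in>A. p a \<ge> 0 \<and> unif_coh (k a) (\<psi> a)) \<and>
      (\<Sum>a\<in>A. p a) = 1 \<and>
      (\<forall>i j. \<rho> i j = (\<Sum>a\<in>A. complex_of_real (p a) * \<psi> a i * cnj (\<psi> a j)))}"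

definition qubit_mat :: "real \<Rightarrow> complex \<Rightarrow> 2 \<Rightarrow> 2 \<Rightarrow> complex" where
  "qubit_mat p z i j =
     (if i = 0 \<and> j = 0 then complex_of_real p
      else if i = 0 \<and> j = 1 then z
      else if i = 1 \<and> j = 0 then cnj z
      else complex_of_real (1 - p))"

end

theory Submission
  imports Defs
begin

text \<open>A state in \<open>\<U>\<^sub>k\<close> has entries of modulus \<open>1/\<surd>k\<close> on a support of size \<open>k\<close>, so
  each of its coherences \<open>\<psi>\<^sub>i \<psi>\<^sub>j\<^sup>*\<close> (\<open>i \<noteq> j\<close>) has modulus \<open>0\<close> or \<open>1/k \<le> (log k)/2\<close>, and never
  exceeds the population \<open>|\<psi>\<^sub>i|\<^sup>2\<close>. By the triangle inequality both bounds pass to any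
  nonnegative mixture: \<open>2|\<rho>\<^sub>i\<^sub>j| \<le> \<Sum> p\<^sub>\<alpha> log k\<^sub>\<alpha>\<close> for every decomposition, and \<open>|\<rho>\<^sub>i\<^sub>j| \<le> \<rho>\<^sub>i\<^sub>i\<close>
  whenever a decomposition exists. For a qubit with \<open>|z| \<le> min p (1 - p)\<close> the bound
  \<open>2|z|\<close> is attained by
  \<open>\<rho> = 2|z| |+\<^sub>\<theta>\<rangle>\<langle>+\<^sub>\<theta>| + (p - |z|) |0\<rangle>\<langle>0| + (1 - p - |z|) |1\<rangle>\<langle>1|\<close> with \<open>\<theta> = arg z\<close> and
  \<open>|+\<^sub>\<theta>\<rangle> = (e\<^sup>i\<^sup>\<theta>|0\<rangle> + |1\<rangle>)/\<surd>2\<close>; otherwise \<open>|z| > \<rho>\<^sub>0\<^sub>0\<close> or \<open>|z| > \<rho>\<^sub>1\<^sub>1\<close> and no decomposition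
  exists.\<close>

definition uc_decomposition ::
    "('n::finite \<Rightarrow> 'n \<Rightarrow> complex) \<Rightarrow> nat set \<Rightarrow> (nat \<Rightarrow> real) \<Rightarrow> (nat \<Rightarrow> nat)
      \<Rightarrow> (nat \<Rightarrow> 'n \<Rightarrow> complex) \<Rightarrow> bool" where
  "uc_decomposition \<rho> A p k \<psi> \<longleftrightarrow>
     finite A \<and> (\<forall>a\<in>A. p a \<ge> 0 \<and> unif_coh (k a) (\<psi> a)) \<and> (\<Sum>a\<in>A. p a) = 1 \<and>
     (\<forall>i j. \<rho> i j = (\<Sum>a\<in>A. complex_of_real (p a) * \<psi> a i * cnj (\<psi> a j)))"

lemma CfU_altdef:
  "CfU \<rho> = Inf {ereal (\<Sum>a\<in>A. p a * log 2 (real (k a))) | A p k \<psi>. uc_decomposition \<rho> A p k \<psi>}"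
  unfolding CfU_def uc_decomposition_def by simp

lemma CfU_le_cost:
  assumes "uc_decomposition \<rho> A p k \<psi>"
  shows "CfU \<rho> \<le> ereal (\<Sum>a\<in>A. p a * log 2 (real (k a)))"
  unfolding CfU_altdef using assms by (blast intro: Inf_lower)

lemma CfU_greatest:
  assumes "\<And>A p k \<psi>. uc_decomposition \<rho> A p k \<psi> \<Longrightarrow> c \<le> (\<Sum>a\<in>A. p a * log 2 (real (k a)))"
  shows "ereal c \<le> CfU \<rho>"
  unfolding CfU_altdef using assms by (auto intro!: Inf_greatest)

lemma CfU_eq_infinity:
  assumes "\<And>A p k \<psi>. \<not> uc_decomposition \<rho> A p k \<psi>"
  shows "CfU \<rho> = \<infinity>"
  unfolding CfU_altdef using assms by (simp add: top_ereal_def)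

lemma unif_coh_support:
  fixes \<psi> :: "'n::finite \<Rightarrow> complex"
  assumes "unif_coh k \<psi>"
  shows unif_coh_pos: "k \<ge> 1"
    and unif_coh_card_support: "card {j. \<psi> j \<noteq> 0} = k"
    and unif_coh_norm: "\<psi> j \<noteq> 0 \<Longrightarrow> cmod (\<psi> j) = 1 / sqrt (real k)"
proof -
  obtain J \<theta> where J: "J \<noteq> {}" "card J = k"
    and \<psi>: "\<And>j. \<psi> j = (if j \<in> J then complex_of_real (1 / sqrt (real k)) * cis (\<theta> j) else 0)"
    using assms unfolding unif_coh_def by blast
  show "k \<ge> 1"
    using J card_gt_0_iff[of J] by simp
  then have "\<psi> j \<noteq> 0 \<longleftrightarrow> j \<in> J" for j
    by (simp add: \<psi>)
  then show "card {j. \<psi> j \<noteq> 0} = k"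
    using J(2) by simp
  show "cmod (\<psi> j) = 1 / sqrt (real k)" if "\<psi> j \<noteq> 0"
    using that by (simp add: \<psi> norm_divide split: if_splits)
qed

lemma unif_coh_coherence_le_log:
  fixes \<psi> :: "'n::finite \<Rightarrow> complex"
  assumes "unif_coh k \<psi>" and "i \<noteq> j"
  shows "2 * cmod (\<psi> i * cnj (\<psi> j)) \<le> log 2 (real k)"
proof (cases "\<psi> i \<noteq> 0 \<and> \<psi> j \<noteq> 0")
  case True
  have "2 = card {i, j}"
    using assms(2) by simp
  also have "\<dots> \<le> card {j. \<psi> j \<noteq> 0}"
    using True by (intro card_mono) auto
  finally have k2: "2 \<le> k"
    using unif_coh_card_support[OF assms(1)] by simp
  have "2 * cmod (\<psi> i * cnj (\<psi> j)) = 2 / real k"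
    using True k2 by (simp add: norm_mult unif_coh_norm[OF assms(1)])
  also have "\<dots> \<le> 1"
    using k2 by simp
  also have "\<dots> \<le> log 2 (real k)"
    using k2 by simp
  finally show ?thesis .
next
  case False
  then show ?thesis
    using unif_coh_pos[OF assms(1)] by auto
qed

lemma unif_coh_coherence_le_population:
  fixes \<psi> :: "'n::finite \<Rightarrow> complex"
  assumes "unif_coh k \<psi>"
  shows "cmod (\<psi> i * cnj (\<psi> j)) \<le> (cmod (\<psi> i))\<^sup>2"
  using unif_coh_norm[OF assms, of i] unif_coh_norm[OF assms, of j]
  by (cases "\<psi> i = 0 \<or> \<psi> j = 0") (auto simp: norm_mult power2_eq_square)

lemma norm_mixture_entry_le:
  assumes "\<forall>a\<in>A. p a \<ge> 0"
  shows "cmod (\<Sum>a\<in>A. complex_of_real (p a) * \<psi> a i * cnj (\<psi> a j))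
           \<le> (\<Sum>a\<in>A. p a * cmod (\<psi> a i * cnj (\<psi> a j)))"
proof -
  have "cmod (\<Sum>a\<in>A. complex_of_real (p a) * \<psi> a i * cnj (\<psi> a j))
          \<le> (\<Sum>a\<in>A. cmod (complex_of_real (p a) * \<psi> a i * cnj (\<psi> a j)))"
    by (rule norm_sum)
  also have "\<dots> = (\<Sum>a\<in>A. p a * cmod (\<psi> a i * cnj (\<psi> a j)))"
    using assms by (intro sum.cong refl) (simp add: norm_mult mult.assoc)
  finally show ?thesis .
qed

lemma Re_mixture_diagonal:
  "Re (\<Sum>a\<in>A. complex_of_real (p a) * \<psi> a i * cnj (\<psi> a i)) = (\<Sum>a\<in>A. p a * (cmod (\<psi> a i))\<^sup>2)"
  unfolding Re_sum by (intro sum.cong refl) (simp add: mult.assoc complex_mult_cnj cmod_power2 flip: of_real_power)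

lemma uc_decomposition_offdiag_le_cost:
  assumes "uc_decomposition \<rho> A p k \<psi>" and "i \<noteq> j"
  shows "2 * cmod (\<rho> i j) \<le> (\<Sum>a\<in>A. p a * log 2 (real (k a)))"
proof -
  have uc: "\<forall>a\<in>A. p a \<ge> 0 \<and> unif_coh (k a) (\<psi> a)"
    and \<rho>: "\<rho> i j = (\<Sum>a\<in>A. complex_of_real (p a) * \<psi> a i * cnj (\<psi> a j))"
    using assms(1) unfolding uc_decomposition_def by blast+
  have "2 * cmod (\<rho> i j) \<le> 2 * (\<Sum>a\<in>A. p a * cmod (\<psi> a i * cnj (\<psi> a j)))"
    unfolding \<rho> using uc by (intro mult_left_mono norm_mixture_entry_le) auto
  also have "\<dots> = (\<Sum>a\<in>A. p a * (2 * cmod (\<psi> a i * cnj (\<psi> a j))))"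
    by (simp add: sum_distrib_left mult.left_commute)
  also have "\<dots> \<le> (\<Sum>a\<in>A. p a * log 2 (real (k a)))"
    using uc unif_coh_coherence_le_log[OF _ assms(2)] by (intro sum_mono mult_left_mono) auto
  finally show ?thesis .
qed

lemma uc_decomposition_entry_le_diag:
  assumes "uc_decomposition \<rho> A p k \<psi>"
  shows "cmod (\<rho> i j) \<le> Re (\<rho> i i)"
proof -
  have uc: "\<forall>a\<in>A. p a \<ge> 0 \<and> unif_coh (k a) (\<psi> a)"
    and \<rho>: "\<And>i j. \<rho> i j = (\<Sum>a\<in>A. complex_of_real (p a) * \<psi> a i * cnj (\<psi> a j))"
    using assms unfolding uc_decomposition_def by blast+
  have "cmod (\<rho> i j) \<le> (\<Sum>a\<in>A. p a * cmod (\<psi> a i * cnj (\<psi> a j)))"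
    unfolding \<rho> using uc by (intro norm_mixture_entry_le) simp
  also have "\<dots> \<le> (\<Sum>a\<in>A. p a * (cmod (\<psi> a i))\<^sup>2)"
    using uc by (intro sum_mono mult_left_mono) (auto intro: unif_coh_coherence_le_population)
  also have "\<dots> = Re (\<rho> i i)"
    unfolding \<rho> Re_mixture_diagonal ..
  finally show ?thesis .
qed

lemma CfU_ge_offdiag:
  fixes \<rho> :: "'n::finite \<Rightarrow> 'n \<Rightarrow> complex"
  assumes "i \<noteq> j"
  shows "ereal (2 * cmod (\<rho> i j)) \<le> CfU \<rho>"
  using uc_decomposition_offdiag_le_cost[OF _ assms] by (rule CfU_greatest)

lemma CfU_eq_infinity_if_entry_gt_diag:
  fixes \<rho> :: "'n::finite \<Rightarrow> 'n \<Rightarrow> complex"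
  assumes "cmod (\<rho> i j) > Re (\<rho> i i)"
  shows "CfU \<rho> = \<infinity>"
  by (meson CfU_eq_infinity assms not_le uc_decomposition_entry_le_diag)

definition basis_ket :: "'n \<Rightarrow> 'n \<Rightarrow> complex" where
  "basis_ket b i = (if i = b then 1 else 0)"

definition plus_ket :: "real \<Rightarrow> 2 \<Rightarrow> complex" where
  "plus_ket \<theta> i = complex_of_real (1 / sqrt 2) * cis (if i = 0 then \<theta> else 0)"

lemma unif_coh_basis_ket: "unif_coh 1 (basis_ket (b::'n::finite))"
  unfolding unif_coh_def basis_ket_def by (rule exI[of _ "{b}"], rule exI[of _ "\<lambda>_. 0"]) auto

lemma unif_coh_plus_ket: "unif_coh 2 (plus_ket \<theta>)"
  unfolding unif_coh_def plus_ket_def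
  by (rule exI[of _ UNIV], rule exI[of _ "\<lambda>i. if i = 0 then \<theta> else 0"]) simp

lemma num2_cases: "(x::2) = 0 \<or> x = 1"
proof (induct x)
  case (of_int z)
  then have "z = 0 \<or> z = 1" by fastforce
  then show ?case by auto
qed

lemma qubit_mat_uc_decomposition:
  assumes "cmod z \<le> p" and "cmod z \<le> 1 - p"
  defines "w \<equiv> \<lambda>a::nat. if a = 0 then 2 * cmod z else if a = 1 then p - cmod z else 1 - p - cmod z"
    and "k \<equiv> \<lambda>a::nat. if a = 0 then 2 else 1"
    and "\<psi> \<equiv> \<lambda>a::nat. if a = 0 then plus_ket (Arg z) else if a = 1 then basis_ket 0 else basis_ket 1"
  shows "uc_decomposition (qubit_mat p z) {0, 1, 2} w k \<psi>"
proof -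
  have "(0::2) \<noteq> 1" by simp
  have z: "complex_of_real (cmod z) * cis (Arg z) = z"
    using rcis_cmod_Arg[of z] by (simp add: rcis_def)
  have "complex_of_real (cmod z) * cis (- Arg z) = cnj z"
    using arg_cong[OF z, of cnj] by (simp add: cis_cnj)
  moreover have "complex_of_real (2 * cmod z) * (complex_of_real (1 / sqrt 2) * complex_of_real (1 / sqrt 2))
      = complex_of_real (cmod z)"
    by (simp flip: of_real_mult) (simp add: mult.commute)
  ultimately have "qubit_mat p z i j = (\<Sum>a\<in>{0, 1, 2}. complex_of_real (w a) * \<psi> a i * cnj (\<psi> a j))"
    for i j
    using num2_cases[of i] num2_cases[of j] z \<open>(0::2) \<noteq> 1\<close>
    by (auto simp: qubit_mat_def w_def \<psi>_def plus_ket_def basis_ket_def cis_cnj cis_mult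
        simp flip: of_real_mult)
  moreover have "\<forall>a\<in>{0, 1, 2}. unif_coh (k a) (\<psi> a)"
    using unif_coh_basis_ket[of "0::2"] unif_coh_basis_ket[of "1::2"]
    by (simp add: k_def \<psi>_def unif_coh_plus_ket)
  ultimately show ?thesis
    using assms(1,2) unfolding uc_decomposition_def by (simp add: w_def)
qed

lemma CfU_qubit_mat_le:
  assumes "cmod z \<le> p" and "cmod z \<le> 1 - p"
  shows "CfU (qubit_mat p z) \<le> ereal (2 * cmod z)"
  using CfU_le_cost[OF qubit_mat_uc_decomposition[OF assms]] by simp

theorem proposition4:
  shows "(\<forall>\<rho> :: 'n::finite \<Rightarrow> 'n \<Rightarrow> complex. is_state \<rho> \<longrightarrow>
            (\<forall>i j. i \<noteq> j \<longrightarrow> ereal (2 * cmod (\<rho> i j)) \<le> CfU \<rho>))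
       \<and> (\<forall>(p::real) (z::complex). is_state (qubit_mat p z) \<longrightarrow>
            CfU (qubit_mat p z) =
              (if cmod z \<le> min p (1 - p) then ereal (2 * cmod z) else \<infinity>))"
proof (intro conjI allI impI)
  fix \<rho> :: "'n \<Rightarrow> 'n \<Rightarrow> complex" and i j :: 'n
  assume "i \<noteq> j"
  then show "ereal (2 * cmod (\<rho> i j)) \<le> CfU \<rho>" by (rule CfU_ge_offdiag)
next
  fix p :: real and z :: complex
  have entries: "qubit_mat p z 0 1 = z" "qubit_mat p z 1 0 = cnj z"
    "Re (qubit_mat p z 0 0) = p" "Re (qubit_mat p z 1 1) = 1 - p"
    by (simp_all add: qubit_mat_def)
  show "CfU (qubit_mat p z) = (if cmod z \<le> min p (1 - p) then ereal (2 * cmod z) else \<infinity>)"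
  proof (cases "cmod z \<le> min p (1 - p)")
    case True
    then show ?thesis
      using CfU_qubit_mat_le[of z p] CfU_ge_offdiag[of 0 1 "qubit_mat p z"] entries by simp
  next
    case False
    then have "cmod (qubit_mat p z 0 1) > Re (qubit_mat p z 0 0) \<or>
               cmod (qubit_mat p z 1 0) > Re (qubit_mat p z 1 1)"
      using entries by auto
    then show ?thesis
      using False CfU_eq_infinity_if_entry_gt_diag by auto
  qed
qed

end
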